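(* Every affine bijection $\sigma:\mathcal{G}_N\to\mathcal{G}_N$ maps the set $\mathcal{I}$ of Ising matrices onto $\mathcal{I}$.
   Context: $\mathcal{G}_N$ is the set of real symmetric positive semi-definite $N\times N$ matrices with unit diagonal; $\mathcal{I}\subseteq\mathcal{G}_N$ is the set of its rank-one elements, i.e. the matrices $\mathbf{s}\mathbf{s}^\top$ with $\mathbf{s}\in\{\pm1\}^N$. *)

theory Defs
  imports "HOL-Analysis.Analysis"
begin

text \<open>N x N real matrices are represented as real^'n^'n with 'n a finite index type (N = CARD('n)).\<close>

definition psd :: "real^'n^'n \<Rightarrow> bool" where
  "psd A \<longleftrightarrow> (\<forall>x. 0 \<le> x \<bullet> (A *v x))"

definition elliptope :: "(real^'n^'n) set" where
  "elliptope = {A. transpose A = A \<and> psd A \<and> (\<forall>i. A $ i $ i = 1)}"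

definition ising :: "(real^'n^'n) set" where
  "ising = {(\<chi> i j. s $ i * s $ j) | s :: real^'n. \<forall>i. s $ i = 1 \<or> s $ i = -1}"

definition affine_on :: "'a::real_vector set \<Rightarrow> ('a \<Rightarrow> 'b::real_vector) \<Rightarrow> bool" where
  "affine_on S f \<longleftrightarrow> (\<forall>x\<in>S. \<forall>y\<in>S. \<forall>t::real. 0 \<le> t \<and> t \<le> 1 \<longrightarrow>
      f ((1 - t) *\<^sub>R x + t *\<^sub>R y) = (1 - t) *\<^sub>R f x + t *\<^sub>R f y)"

end

theory Submission
  imports Defs
begin

text \<open>
  Measure distances by the entrywise \<open>\<ell>\<^sub>1\<close>-norm. An Ising matrix \<open>X\<close> is a sharp vertex of the
  elliptope: \<open>\<ell>\<^sub>1(X - P) = \<langle>X, X - P\<rangle>\<close> is affine in \<open>P \<in> \<G>\<^sub>N\<close>, so \<open>\<ell>\<^sub>1(X - Y) \<le> 2 \<ell>\<^sub>1(X - (Y + Y')/2)\<close>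
  for all \<open>Y, Y' \<in> \<G>\<^sub>N\<close>. Affine self-maps of the bounded convex body \<open>\<G>\<^sub>N\<close> are Lipschitz, so
  an affine bijection and its inverse transport this sharpness, up to a constant, to the
  image of an Ising matrix. A matrix \<open>W \<in> \<G>\<^sub>N\<close> with some \<open>|W\<^sub>i\<^sub>j| < 1\<close> is not sharp: the
  congruences of \<open>W\<close> that replace row and column \<open>i\<close> by a combination of rows and columns
  \<open>i\<close> and \<open>j\<close> form a smooth curve in \<open>\<G>\<^sub>N\<close> through \<open>W\<close>, whose chords of length \<open>\<epsilon>\<close> have
  midpoints at distance \<open>O(\<epsilon>\<^sup>2)\<close> from \<open>W\<close>.
\<close>

section \<open>Affine maps on convex sets\<close>

lemma affine_on_diff_eq:
  assumes "affine_on S f" "x \<in> S" "y \<in> S" "u \<in> S" "v \<in> S" "0 \<le> t" "t \<le> 1"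
    and "(1 - t) *\<^sub>R (y - x) = t *\<^sub>R (v - u)"
  shows "(1 - t) *\<^sub>R (f y - f x) = t *\<^sub>R (f v - f u)"
proof -
  have "(1 - t) *\<^sub>R y + t *\<^sub>R u = (1 - t) *\<^sub>R x + t *\<^sub>R v"
    using assms(8) by (simp add: algebra_simps)
  then have "(1 - t) *\<^sub>R f y + t *\<^sub>R f u = (1 - t) *\<^sub>R f x + t *\<^sub>R f v"
    using assms(1-7) unfolding affine_on_def by metis
  then show ?thesis by (simp add: algebra_simps)
qed

lemma affine_on_midpoint:
  assumes "affine_on S f" "x \<in> S" "y \<in> S"
  shows "f (midpoint x y) = midpoint (f x) (f y)"
proof -
  have "f ((1 - t) *\<^sub>R x + t *\<^sub>R y) = (1 - t) *\<^sub>R f x + t *\<^sub>R f y" if "0 \<le> t" "t \<le> 1" for t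
    using assms that unfolding affine_on_def by blast
  from this[of "1/2"] show ?thesis by (simp add: midpoint_def scaleR_add_right)
qed

lemma affine_on_inv_into:
  assumes "convex S" "affine_on S f" "inj_on f S"
  shows "affine_on (f ` S) (inv_into S f)"
  unfolding affine_on_def
proof (intro ballI allI impI)
  fix x y and t :: real
  assume "x \<in> f ` S" "y \<in> f ` S" and t: "0 \<le> t \<and> t \<le> 1"
  then obtain a b where ab: "a \<in> S" "b \<in> S" "x = f a" "y = f b" by auto
  have "(1 - t) *\<^sub>R a + t *\<^sub>R b \<in> S" using assms(1) ab t unfolding convex_alt by blast
  moreover have "f ((1 - t) *\<^sub>R a + t *\<^sub>R b) = (1 - t) *\<^sub>R x + t *\<^sub>R y"
    using assms(2) ab t unfolding affine_on_def by blast
  ultimately show "inv_into S f ((1 - t) *\<^sub>R x + t *\<^sub>R y) =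
      (1 - t) *\<^sub>R inv_into S f x + t *\<^sub>R inv_into S f y"
    using assms(3) ab by (metis inv_into_f_f)
qed

section \<open>The elliptope\<close>

lemma matrix_vector_mult_axis: "((A::real^'n^'n) *v axis q b) $ p = A $ p $ q * b"
  by (simp add: matrix_vector_mult_def axis_def if_distrib sum.delta' cong: if_cong)

lemma inner_axis_matrix_axis: "axis p a \<bullet> (A *v axis q b) = a * b * (A::real^'n^'n) $ p $ q"
  by (simp add: inner_axis' matrix_vector_mult_axis)

lemma quadratic_form_axis_pair:
  "(axis k a + axis l b) \<bullet> ((A::real^'n^'n) *v (axis k a + axis l b))
    = a * a * A $ k $ k + a * b * A $ k $ l + b * a * A $ l $ k + b * b * A $ l $ l"
  by (simp add: matrix_vector_right_distrib inner_add_left inner_add_right inner_axis_matrix_axis)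

lemma elliptope_symmetric: "A \<in> elliptope \<Longrightarrow> A $ l $ k = A $ k $ l"
  unfolding elliptope_def by (metis (mono_tags, lifting) mem_Collect_eq transpose_def vec_lambda_beta)

lemma elliptope_diag: "A \<in> elliptope \<Longrightarrow> A $ k $ k = 1"
  unfolding elliptope_def by auto

lemma elliptope_psd: "A \<in> elliptope \<Longrightarrow> 0 \<le> x \<bullet> (A *v x)"
  unfolding elliptope_def psd_def by auto

lemma elliptope_entry_abs_le: assumes "A \<in> elliptope" shows "\<bar>A $ k $ l\<bar> \<le> 1"
proof (cases "k = l")
  case True
  then show ?thesis using elliptope_diag[OF assms] by simp
next
  case False
  have "0 \<le> 2 + 2 * c * A $ k $ l" if "c * c = 1" for c
    using elliptope_psd[OF assms, of "axis k 1 + axis l c"] quadratic_form_axis_pair[of k 1 l c A]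
      elliptope_symmetric[OF assms, of l k] elliptope_diag[OF assms] that
    by (simp add: algebra_simps)
  from this[of 1] this[of "-1"] show ?thesis by linarith
qed

lemma convex_elliptope: "convex elliptope"
  unfolding convex_alt
proof (intro ballI allI impI)
  fix A B :: "real^'n^'n" and t :: real
  assume A: "A \<in> elliptope" and B: "B \<in> elliptope" and t: "0 \<le> t \<and> t \<le> 1"
  let ?C = "(1 - t) *\<^sub>R A + t *\<^sub>R B"
  have "transpose ?C = ?C"
    using A B unfolding elliptope_def by (simp add: transpose_def vec_eq_iff)
  moreover have "0 \<le> x \<bullet> (?C *v x)" for x
  proof -
    have "x \<bullet> (?C *v x) = (1 - t) * (x \<bullet> (A *v x)) + t * (x \<bullet> (B *v x))"
      by (simp add: matrix_vector_mult_add_rdistrib scaleR_matrix_vector_assoc[symmetric]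
          inner_add_right)
    then show ?thesis using t elliptope_psd[OF A, of x] elliptope_psd[OF B, of x] by simp
  qed
  moreover have "?C $ i $ i = 1" for i
    using elliptope_diag[OF A] elliptope_diag[OF B] by (simp add: algebra_simps)
  ultimately show "?C \<in> elliptope" unfolding elliptope_def psd_def by simp
qed

section \<open>The entrywise \<open>\<ell>\<^sub>1\<close>-norm\<close>

definition entry_l1 :: "real^'n^'n \<Rightarrow> real" where
  "entry_l1 A = (\<Sum>k\<in>UNIV. \<Sum>l\<in>UNIV. \<bar>A $ k $ l\<bar>)"

lemma abs_entry_le_entry_l1: "\<bar>A $ i $ j\<bar> \<le> entry_l1 A"
proof -
  have "\<bar>A $ i $ j\<bar> \<le> (\<Sum>l\<in>UNIV. \<bar>A $ i $ l\<bar>)" by (rule member_le_sum) auto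
  also have "\<dots> \<le> entry_l1 A" unfolding entry_l1_def by (rule member_le_sum) (auto intro: sum_nonneg)
  finally show ?thesis .
qed

lemma entry_l1_nonneg: "0 \<le> entry_l1 A"
  unfolding entry_l1_def by (auto intro!: sum_nonneg)

lemma entry_l1_eq_0_iff: "entry_l1 A = 0 \<longleftrightarrow> A = 0"
  using abs_entry_le_entry_l1[of A] by (auto simp: entry_l1_def vec_eq_iff)

lemma entry_l1_diff_le: "entry_l1 (A - B) \<le> entry_l1 A + entry_l1 B"
  unfolding entry_l1_def sum.distrib[symmetric] by (intro sum_mono) (simp add: abs_triangle_ineq4)

lemma entry_l1_scaleR: "entry_l1 (c *\<^sub>R A) = \<bar>c\<bar> * entry_l1 A"
  unfolding entry_l1_def by (simp add: abs_mult sum_distrib_left)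

lemma entry_l1_le_of_entries:
  fixes A :: "real^'n^'n"
  assumes "\<And>k l. \<bar>A $ k $ l\<bar> \<le> c"
  shows "entry_l1 A \<le> real CARD('n) ^ 2 * c"
proof -
  have "entry_l1 A \<le> (\<Sum>k\<in>(UNIV::'n set). \<Sum>l\<in>(UNIV::'n set). c)"
    unfolding entry_l1_def by (intro sum_mono assms)
  then show ?thesis by (simp add: power2_eq_square)
qed

lemma entry_l1_elliptope_le: "A \<in> elliptope \<Longrightarrow> entry_l1 (A::real^'n^'n) \<le> real CARD('n) ^ 2"
  using entry_l1_le_of_entries[of A 1] elliptope_entry_abs_le by auto

lemma quadratic_form_abs_le: "\<bar>(x::real^'n) \<bullet> (D *v x)\<bar> \<le> entry_l1 D * (x \<bullet> x)"
proof -
  have "x \<bullet> (D *v x) = (\<Sum>k\<in>UNIV. \<Sum>l\<in>UNIV. D $ k $ l * (x $ k * x $ l))"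
    by (simp add: inner_vec_def matrix_vector_mult_def sum_distrib_left mult_ac)
  also have "\<bar>\<dots>\<bar> \<le> (\<Sum>k\<in>UNIV. \<Sum>l\<in>UNIV. \<bar>D $ k $ l * (x $ k * x $ l)\<bar>)"
    by (rule order_trans[OF sum_abs], rule sum_mono, rule sum_abs)
  also have "\<dots> \<le> (\<Sum>k\<in>UNIV. \<Sum>l\<in>UNIV. \<bar>D $ k $ l\<bar> * (x \<bullet> x))"
  proof (intro sum_mono)
    fix k l
    have sq: "x $ m * x $ m \<le> x \<bullet> x" for m
      unfolding inner_vec_def inner_real_def by (rule member_le_sum) auto
    have "2 * \<bar>x $ k * x $ l\<bar> \<le> x $ k * x $ k + x $ l * x $ l"
      using sum_squares_bound[of "\<bar>x $ k\<bar>" "\<bar>x $ l\<bar>"] by (simp add: abs_mult power2_eq_square)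
    then have "\<bar>x $ k * x $ l\<bar> \<le> x \<bullet> x" using sq[of k] sq[of l] by linarith
    then show "\<bar>D $ k $ l * (x $ k * x $ l)\<bar> \<le> \<bar>D $ k $ l\<bar> * (x \<bullet> x)"
      by (simp add: abs_mult mult_left_mono)
  qed
  also have "\<dots> = entry_l1 D * (x \<bullet> x)" by (simp add: entry_l1_def sum_distrib_right)
  finally show ?thesis .
qed

lemma identity_plus_in_elliptope:
  fixes D :: "real^'n^'n"
  assumes "transpose D = D" "\<And>k. D $ k $ k = 0" "entry_l1 D \<le> 1"
  shows "mat 1 + D \<in> elliptope"
proof -
  have "transpose (mat 1 + D) = mat 1 + D"
    using assms(1) by (simp add: transpose_def vec_eq_iff mat_def)
  moreover have "0 \<le> x \<bullet> ((mat 1 + D) *v x)" for x :: "real^'n"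
  proof -
    have "\<bar>x \<bullet> (D *v x)\<bar> \<le> x \<bullet> x"
      using quadratic_form_abs_le[of x D] assms(3)
      by (meson inner_ge_zero mult_left_le_one_le entry_l1_nonneg order_trans)
    then show ?thesis by (simp add: matrix_vector_mult_add_rdistrib inner_add_right)
  qed
  moreover have "(mat 1 + D) $ i $ i = 1" for i using assms(2) by (simp add: mat_def)
  ultimately show ?thesis unfolding elliptope_def psd_def by simp
qed

text \<open>
  The unit ball of \<open>\<ell>\<^sub>1\<close> around \<open>mat 1\<close> in the affine hull of \<open>\<G>\<^sub>N\<close> lies in \<open>\<G>\<^sub>N\<close>, while \<open>\<G>\<^sub>N\<close> has
  \<open>\<ell>\<^sub>1\<close>-radius \<open>N\<^sup>2\<close>: a difference \<open>B - A\<close> of norm \<open>n\<close> is parallel to the chord from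
  \<open>mat 1 - D\<close> to \<open>mat 1 + D\<close>, \<open>D = (B - A)/n\<close>, and affine maps preserve ratios of parallel chords.
\<close>
lemma affine_on_elliptope_lipschitz:
  fixes \<phi> :: "real^'n^'n \<Rightarrow> real^'n^'n"
  assumes aff: "affine_on elliptope \<phi>" and into: "\<phi> ` elliptope \<subseteq> elliptope"
    and A: "A \<in> elliptope" and B: "B \<in> elliptope"
  shows "entry_l1 (\<phi> B - \<phi> A) \<le> real CARD('n) ^ 2 * entry_l1 (B - A)"
proof (cases "A = B")
  case False
  define n where "n = entry_l1 (B - A)"
  have n0: "n > 0"
    using False entry_l1_nonneg[of "B - A"] entry_l1_eq_0_iff[of "B - A"] unfolding n_def by auto
  define D where "D = (1 / n) *\<^sub>R (B - A)"
  have tD: "transpose D = D" "transpose (- D) = - D"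
    using A B unfolding elliptope_def by (simp_all add: D_def transpose_def vec_eq_iff)
  have dD: "D $ k $ k = 0" for k using elliptope_diag[OF A] elliptope_diag[OF B] by (simp add: D_def)
  have nD: "entry_l1 D = 1" "entry_l1 (- D) = 1"
    using n0 entry_l1_scaleR[of "-1" D] by (simp_all add: D_def entry_l1_scaleR n_def)
  have Cp: "mat 1 + D \<in> elliptope" and Cm: "mat 1 + - D \<in> elliptope"
    using identity_plus_in_elliptope[OF tD(1) dD] identity_plus_in_elliptope[OF tD(2)] dD nD
    by simp_all
  define t where "t = n / (2 + n)"
  have t: "0 < t" "t \<le> 1" "1 - t = t * (2 / n)" using n0 by (auto simp: t_def field_simps)
  have chord: "(1 - t) *\<^sub>R (B - A) = t *\<^sub>R ((mat 1 + D) - (mat 1 + - D))"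
    using t(3) n0 by (simp add: D_def scaleR_2[symmetric])
  have par: "(1 - t) *\<^sub>R (\<phi> B - \<phi> A) = t *\<^sub>R (\<phi> (mat 1 + D) - \<phi> (mat 1 + - D))"
    by (rule affine_on_diff_eq[OF aff A B Cm Cp _ t(2) chord]) (use t(1) in simp)
  have "\<phi> (mat 1 + D) \<in> elliptope" "\<phi> (mat 1 + - D) \<in> elliptope" using into Cp Cm by auto
  then have "entry_l1 (\<phi> (mat 1 + D) - \<phi> (mat 1 + - D)) \<le> 2 * real CARD('n) ^ 2"
    using entry_l1_diff_le[of "\<phi> (mat 1 + D)" "\<phi> (mat 1 + - D)"]
      entry_l1_elliptope_le[of "\<phi> (mat 1 + D)"] entry_l1_elliptope_le[of "\<phi> (mat 1 + - D)"]
    by linarith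
  then have "t * ((2 / n) * entry_l1 (\<phi> B - \<phi> A)) \<le> t * (2 * real CARD('n) ^ 2)"
    using arg_cong[OF par, of entry_l1] t n0 by (simp add: entry_l1_scaleR mult.assoc)
  then have "(2 / n) * entry_l1 (\<phi> B - \<phi> A) \<le> 2 * real CARD('n) ^ 2"
    using t(1) by (rule mult_left_le_imp_le)
  then show ?thesis using n0 by (simp add: n_def field_simps)
qed (simp add: entry_l1_def)

section \<open>Ising matrices\<close>

lemma ising_subset_elliptope: "ising \<subseteq> elliptope"
proof
  fix X :: "real^'n^'n"
  assume "X \<in> ising"
  then obtain s :: "real^'n" where X: "X = (\<chi> i j. s $ i * s $ j)" and s: "\<forall>i. s $ i = 1 \<or> s $ i = -1"
    unfolding ising_def by blast
  have "transpose X = X" by (simp add: X transpose_def vec_eq_iff mult.commute)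
  moreover have "X $ i $ i = 1" for i using s[rule_format, of i] by (auto simp: X)
  moreover have "X *v x = (s \<bullet> x) *\<^sub>R s" for x
    by (simp add: X vec_eq_iff matrix_vector_mult_def inner_vec_def sum_distrib_left mult_ac)
  then have "x \<bullet> (X *v x) = (s \<bullet> x) * (s \<bullet> x)" for x by (simp add: inner_commute)
  ultimately show "X \<in> elliptope" unfolding elliptope_def psd_def by simp
qed

text \<open>
  Every entry of \<open>X\<close> is \<open>\<plusminus>1\<close> and every entry of \<open>P\<close> lies in \<open>[-1, 1]\<close>, so \<open>|X\<^sub>k\<^sub>l - P\<^sub>k\<^sub>l| = X\<^sub>k\<^sub>l (X\<^sub>k\<^sub>l - P\<^sub>k\<^sub>l)\<close>.
\<close>
lemma entry_l1_ising_diff: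
  fixes X P :: "real^'n^'n"
  assumes X: "X \<in> ising" and P: "P \<in> elliptope"
  shows "entry_l1 (X - P) = X \<bullet> (X - P)"
proof -
  obtain s :: "real^'n" where X: "X = (\<chi> i j. s $ i * s $ j)" and s: "\<forall>i. s $ i = 1 \<or> s $ i = -1"
    using X unfolding ising_def by blast
  have "\<bar>X $ k $ l - P $ k $ l\<bar> = X $ k $ l * (X $ k $ l - P $ k $ l)" for k l
  proof -
    have "X $ k $ l = 1 \<or> X $ k $ l = -1" using s[rule_format, of k] s[rule_format, of l] by (auto simp: X)
    with elliptope_entry_abs_le[OF P, of k l] show ?thesis by auto
  qed
  then show ?thesis unfolding entry_l1_def inner_vec_def inner_real_def by simp
qed

lemma psd_quadratic_form_eq_0_imp:
  fixes W :: "real^'n^'n"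
  assumes "psd W" "transpose W = W" "v \<bullet> (W *v v) = 0"
  shows "W *v v = 0"
proof (rule ccontr)
  assume "W *v v \<noteq> 0"
  define u where "u = W *v v"
  define a where "a = u \<bullet> u"
  define c where "c = u \<bullet> (W *v u)"
  have a: "a > 0" using \<open>W *v v \<noteq> 0\<close> by (simp add: a_def u_def)
  have c: "c \<ge> 0" using assms(1) by (simp add: c_def psd_def)
  have "v \<bullet> (W *v u) = (transpose W *v v) \<bullet> u" by (simp flip: dot_lmul_matrix)
  then have "v \<bullet> (W *v u) = a" using assms(2) by (simp add: a_def u_def)
  then have "(v + t *\<^sub>R u) \<bullet> (W *v (v + t *\<^sub>R u)) = 2 * t * a + t * t * c" for t
    using assms(3) by (simp add: matrix_vector_right_distrib matrix_vector_mult_scaleR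
        inner_add_left inner_add_right a_def c_def u_def algebra_simps)
  moreover have "0 \<le> (v + t *\<^sub>R u) \<bullet> (W *v (v + t *\<^sub>R u))" for t
    using assms(1) unfolding psd_def by blast
  ultimately have Q: "0 \<le> 2 * t * a + t * t * c" for t by metis
  define s where "s = a / (c + 1)"
  have s: "s > 0" "s * c < a" using a c by (simp_all add: s_def divide_less_eq)
  have "0 \<le> s * (s * c - 2 * a)" using Q[of "- s"] by (simp add: algebra_simps)
  then have "2 * a \<le> s * c" using s(1) by (simp add: zero_le_mult_iff)
  with s(2) a show False by linarith
qed

text \<open>
  An element of \<open>\<G>\<^sub>N\<close> with \<open>W\<^sub>l\<^sub>a = c = \<plusminus>1\<close> annihilates \<open>e\<^sub>l - c e\<^sub>a\<close>, so row \<open>l\<close> is \<open>c\<close> times row \<open>a\<close>;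
  with a fixed index \<open>a\<close>, \<open>W = s s\<^sup>T\<close> for the column \<open>s\<close> of \<open>W\<close> at \<open>a\<close>.
\<close>
lemma ising_if_abs_entries_eq_1:
  fixes W :: "real^'n^'n"
  assumes W: "W \<in> elliptope" and one: "\<And>k l. \<bar>W $ k $ l\<bar> = 1"
  shows "W \<in> ising"
proof -
  fix a :: 'n
  define s where "s = (\<chi> m. W $ m $ a)"
  have rows: "W $ m $ l = W $ m $ a * W $ l $ a" for m l
  proof -
    define c where "c = W $ l $ a"
    have "c * c = 1" using one[of l a] unfolding c_def by (metis abs_mult_self_eq mult_1)
    then have "(axis l 1 + axis a (-c)) \<bullet> (W *v (axis l 1 + axis a (-c))) = 0"
      using quadratic_form_axis_pair[of l 1 a "-c" W] elliptope_diag[OF W]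
        elliptope_symmetric[OF W, of a l] by (simp add: c_def)
    then have "W *v (axis l 1 + axis a (-c)) = 0"
      using W unfolding elliptope_def by (intro psd_quadratic_form_eq_0_imp) auto
    then have "(W *v (axis l 1 + axis a (-c))) $ m = 0" by simp
    then show ?thesis by (simp add: matrix_vector_right_distrib matrix_vector_mult_axis c_def)
  qed
  have "W = (\<chi> i j. s $ i * s $ j)"
    unfolding vec_eq_iff s_def vec_lambda_beta using rows by blast
  moreover have "s $ i = 1 \<or> s $ i = -1" for i
    using one[of i a] by (simp add: s_def abs_if split: if_splits)
  ultimately show ?thesis unfolding ising_def by blast
qed

lemma midpoint_in_elliptope:
  fixes P P' :: "real^'n^'n"
  assumes "P \<in> elliptope" "P' \<in> elliptope"
  shows "midpoint P P' \<in> elliptope"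
proof -
  have "(1 - u) *\<^sub>R P + u *\<^sub>R P' \<in> elliptope" if "0 \<le> u" "u \<le> 1" for u
    using convex_elliptope assms that unfolding convex_alt by blast
  from this[of "1/2"] show ?thesis by (simp add: midpoint_def scaleR_add_right)
qed

lemma ising_sharp:
  assumes "X \<in> ising" "P \<in> elliptope" "P' \<in> elliptope"
  shows "entry_l1 (X - P) \<le> 2 * entry_l1 (X - midpoint P P')"
proof -
  have "entry_l1 (X - midpoint P P') = X \<bullet> (X - midpoint P P')"
    by (rule entry_l1_ising_diff[OF assms(1) midpoint_in_elliptope[OF assms(2,3)]])
  also have "\<dots> = (X \<bullet> (X - P) + X \<bullet> (X - P')) / 2"
    unfolding midpoint_def inner_diff_right inner_add_right inner_scaleR_right by (simp add: field_simps)
  also have "\<dots> = (entry_l1 (X - P) + entry_l1 (X - P')) / 2"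
    using assms by (simp add: entry_l1_ising_diff)
  finally have "2 * entry_l1 (X - midpoint P P') = entry_l1 (X - P) + entry_l1 (X - P')"
    by simp
  then show ?thesis using entry_l1_nonneg[of "X - P'"] by linarith
qed

lemma affine_bij_image_ising_sharp:
  fixes \<sigma> :: "real^'n^'n \<Rightarrow> real^'n^'n"
  assumes aff: "affine_on elliptope \<sigma>" and bij: "bij_betw \<sigma> elliptope elliptope"
    and X: "X \<in> ising" and Y: "Y \<in> elliptope" and Y': "Y' \<in> elliptope"
  shows "entry_l1 (\<sigma> X - Y) \<le> 2 * real CARD('n) ^ 4 * entry_l1 (\<sigma> X - midpoint Y Y')"
proof -
  define \<tau> where "\<tau> = inv_into elliptope \<sigma>"
  define K where "K = real CARD('n) ^ 2"
  have inj: "inj_on \<sigma> elliptope" and onto: "\<sigma> ` elliptope = elliptope"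
    using bij by (auto simp: bij_betw_def)
  have X': "X \<in> elliptope" using X ising_subset_elliptope by blast
  have aff\<tau>: "affine_on elliptope \<tau>"
    using affine_on_inv_into[OF convex_elliptope aff inj] onto by (simp add: \<tau>_def)
  have into\<tau>: "\<tau> ` elliptope \<subseteq> elliptope"
    using bij_betw_inv_into[OF bij] by (auto simp: \<tau>_def bij_betw_def)
  have \<sigma>\<tau>: "\<sigma> (\<tau> y) = y" if "y \<in> elliptope" for y
    using that onto by (simp add: \<tau>_def f_inv_into_f)
  have \<tau>\<sigma>X: "\<tau> (\<sigma> X) = X" using inv_into_f_f[OF inj X'] by (simp add: \<tau>_def)
  have \<sigma>X: "\<sigma> X \<in> elliptope" using X' onto by blast
  have P: "\<tau> Y \<in> elliptope" "\<tau> Y' \<in> elliptope" using into\<tau> Y Y' by auto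
  have "entry_l1 (\<sigma> X - Y) = entry_l1 (\<sigma> X - \<sigma> (\<tau> Y))" using \<sigma>\<tau>[OF Y] by simp
  also have "\<dots> \<le> K * entry_l1 (X - \<tau> Y)"
    unfolding K_def using affine_on_elliptope_lipschitz[OF aff _ P(1) X'] onto by simp
  also have "\<dots> \<le> K * (2 * entry_l1 (X - \<tau> (midpoint Y Y')))"
    using ising_sharp[OF X P] affine_on_midpoint[OF aff\<tau> Y Y'] by (simp add: K_def)
  also have "\<dots> = 2 * K * entry_l1 (\<tau> (\<sigma> X) - \<tau> (midpoint Y Y'))" by (simp add: \<tau>\<sigma>X)
  also have "\<dots> \<le> 2 * K * (K * entry_l1 (\<sigma> X - midpoint Y Y'))"
    using affine_on_elliptope_lipschitz[OF aff\<tau> into\<tau> midpoint_in_elliptope[OF Y Y'] \<sigma>X]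
    by (intro mult_left_mono) (simp_all add: K_def)
  also have "\<dots> = 2 * real CARD('n) ^ 4 * entry_l1 (\<sigma> X - midpoint Y Y')"
    unfolding K_def by algebra
  finally show ?thesis .
qed

section \<open>A curve through a non-Ising point\<close>

lemma psd_congruence:
  fixes M W :: "real^'n^'n"
  assumes "psd W"
  shows "psd (M ** W ** transpose M)"
  unfolding psd_def
proof
  fix x :: "real^'n"
  have "x \<bullet> ((M ** W ** transpose M) *v x) = (transpose M *v x) \<bullet> (W *v (transpose M *v x))"
    by (simp add: matrix_vector_mul_assoc[symmetric] dot_lmul_matrix[symmetric])
  then show "0 \<le> x \<bullet> ((M ** W ** transpose M) *v x)" using assms by (simp add: psd_def)
qed

lemma congruence_entry: "((M::real^'n^'n) ** W ** transpose M) $ k $ l = M $ k \<bullet> (W *v M $ l)"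
proof -
  have "(M ** W ** transpose M) $ k $ l = (\<Sum>p\<in>UNIV. \<Sum>q\<in>UNIV. M $ k $ q * (W $ q $ p * M $ l $ p))"
    by (simp add: matrix_matrix_mult_def transpose_def sum_distrib_left sum_distrib_right mult_ac)
  also have "\<dots> = M $ k \<bullet> (W *v M $ l)"
    by (subst sum.swap) (simp add: inner_vec_def matrix_vector_mult_def sum_distrib_left)
  finally show ?thesis .
qed

definition mix_congruence :: "real^'n^'n \<Rightarrow> 'n \<Rightarrow> 'n \<Rightarrow> real \<Rightarrow> real \<Rightarrow> real^'n^'n" where
  "mix_congruence W i j a b =
    (let M = (\<chi> k. if k = i then axis i a + axis j b else axis k 1) in M ** W ** transpose M)"

lemma mix_congruence_entry:
  assumes W: "W \<in> elliptope" and ij: "i \<noteq> j"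
  shows "mix_congruence W i j a b $ k $ l =
    (if k = i then (if l = i then a * a + 2 * a * b * W $ i $ j + b * b else a * W $ i $ l + b * W $ j $ l)
     else (if l = i then a * W $ i $ k + b * W $ j $ k else W $ k $ l))"
proof -
  have s: "W $ p $ q = W $ q $ p" for p q using elliptope_symmetric[OF W] by blast
  show ?thesis
    unfolding mix_congruence_def Let_def congruence_entry vec_lambda_beta
    using ij elliptope_diag[OF W]
    by (auto simp: matrix_vector_right_distrib inner_add_left inner_add_right inner_axis_matrix_axis
        algebra_simps s[of k i] s[of k j] s[of j i])
qed

lemma mix_congruence_in_elliptope:
  fixes W :: "real^'n^'n"
  assumes W: "W \<in> elliptope" and ij: "i \<noteq> j" and ab: "a * a + 2 * a * b * W $ i $ j + b * b = 1"
  shows "mix_congruence W i j a b \<in> elliptope"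
proof -
  have "transpose W = W" "psd W" using W unfolding elliptope_def by auto
  then have "transpose (mix_congruence W i j a b) = mix_congruence W i j a b"
    "psd (mix_congruence W i j a b)"
    by (simp_all add: mix_congruence_def Let_def matrix_transpose_mul matrix_mul_assoc psd_congruence)
  moreover have "mix_congruence W i j a b $ k $ k = 1" for k
    using mix_congruence_entry[OF W ij] ab elliptope_diag[OF W] by simp
  ultimately show ?thesis unfolding elliptope_def by simp
qed

text \<open>
  If \<open>a + a' = 2 (1 - r)\<close>, the midpoint of the congruences with parameters \<open>(a, b)\<close> and \<open>(a', -b)\<close>
  only rescales the off-diagonal part of row and column \<open>i\<close> of \<open>W\<close> by \<open>1 - r\<close>.
\<close>
lemma entry_l1_diff_midpoint_mix_congruence:
  fixes W :: "real^'n^'n"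
  assumes W: "W \<in> elliptope" and ij: "i \<noteq> j"
    and ab: "a * a + 2 * a * b * W $ i $ j + b * b = 1"
    and ab': "a' * a' - 2 * a' * b * W $ i $ j + b * b = 1"
    and r: "a + a' = 2 * (1 - r)" "0 \<le> r"
  shows "entry_l1 (W - midpoint (mix_congruence W i j a b) (mix_congruence W i j a' (- b)))
    \<le> real CARD('n) ^ 2 * r"
proof (rule entry_l1_le_of_entries)
  fix k l
  have row: "x - (a * x + a' * x) / 2 = r * x" for x
  proof -
    have sum: "a * x + a' * x = 2 * x - 2 * (r * x)"
      using arg_cong[OF r(1), of "\<lambda>t. t * x"] by (simp add: algebra_simps)
    show ?thesis unfolding sum by (simp add: field_simps)
  qed
  have "(W - midpoint (mix_congruence W i j a b) (mix_congruence W i j a' (- b))) $ k $ l =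
    (if k = i \<and> l = i then 0 else if k = i then r * W $ i $ l else if l = i then r * W $ i $ k else 0)"
    using ab ab' elliptope_diag[OF W] elliptope_symmetric[OF W, of k i]
    by (simp add: midpoint_def mix_congruence_entry[OF W ij] row)
  then show "\<bar>(W - midpoint (mix_congruence W i j a b) (mix_congruence W i j a' (- b))) $ k $ l\<bar> \<le> r"
    using r(2) elliptope_entry_abs_le[OF W, of i l] elliptope_entry_abs_le[OF W, of i k]
    by (auto simp: abs_mult mult_left_le)
qed

lemma ellipse_rational_point:
  fixes d e q w :: real
  assumes "d = 1 - w * w" "q = e * e + d" "q \<noteq> 0"
  shows "((d - e * e + 2 * e * w) / q) * ((d - e * e + 2 * e * w) / q)
      + 2 * ((d - e * e + 2 * e * w) / q) * (- 2 * e / q) * w + (- 2 * e / q) * (- 2 * e / q) = 1"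
proof -
  let ?n = "d - e * e + 2 * e * w"
  have "?n / q * (?n / q) + 2 * (?n / q) * (- 2 * e / q) * w + (- 2 * e / q) * (- 2 * e / q)
      = (?n * ?n + 2 * ?n * (- 2 * e) * w + (- 2 * e) * (- 2 * e)) / (q * q)"
    using assms(3) by (simp add: field_simps)
  also have "?n * ?n + 2 * ?n * (- 2 * e) * w + (- 2 * e) * (- 2 * e) = q * q"
    unfolding assms(1,2) by algebra
  finally show ?thesis using assms(3) by simp
qed

text \<open>
  Along the curve \<open>t \<mapsto> mix_congruence W i j a(t) b(t)\<close>, parametrised rationally by the ellipse
  \<open>a\<^sup>2 + 2abW\<^sub>i\<^sub>j + b\<^sup>2 = 1\<close>, the points at parameters \<open>\<plusminus>\<epsilon>\<close> are at distance of order \<open>\<epsilon>\<close> from \<open>W\<close>,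
  but their midpoint is at distance of order \<open>\<epsilon>\<^sup>2\<close>.
\<close>
lemma not_ising_imp_far_chord_near_midpoint:
  fixes W :: "real^'n^'n"
  assumes W: "W \<in> elliptope" "W \<notin> ising" and C: "0 \<le> C"
  shows "\<exists>Y\<in>elliptope. \<exists>Y'\<in>elliptope. C * entry_l1 (W - midpoint Y Y') < entry_l1 (W - Y)"
proof -
  obtain i j where "\<bar>W $ i $ j\<bar> \<noteq> 1" using ising_if_abs_entries_eq_1 W by blast
  define w where "w = W $ i $ j"
  have w: "\<bar>w\<bar> < 1" "i \<noteq> j"
    using elliptope_entry_abs_le[OF W(1), of i j] elliptope_diag[OF W(1)] \<open>\<bar>W $ i $ j\<bar> \<noteq> 1\<close>
    by (auto simp: w_def)
  define K where "K = real CARD('n) ^ 2"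
  define d where "d = 1 - w * w"
  define e where "e = d / (1 + C * K)"
  define q where "q = e * e + d"
  define a where "a = (d - e * e + 2 * e * w) / q"
  define a' where "a' = (d - e * e - 2 * e * w) / q"
  define b where "b = - 2 * e / q"
  define r where "r = 2 * e * e / q"
  have CK: "0 \<le> C * K" using C by (simp add: K_def)
  have d: "d > 0" using w(1) abs_square_less_1[of w] by (simp add: d_def power2_eq_square)
  then have e: "e > 0" and q: "q > 0" using CK by (simp_all add: e_def q_def add_pos_pos)
  have ab: "a * a + 2 * a * b * W $ i $ j + b * b = 1"
    using ellipse_rational_point[OF d_def q_def] q by (simp add: a_def b_def w_def)
  have ab': "a' * a' - 2 * a' * b * W $ i $ j + b * b = 1"
    using ellipse_rational_point[of d w q "- e"] d_def q_def q by (simp add: a'_def b_def w_def)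
  have "a + a' = 2 * (d - e * e) / q"
    using q by (simp add: a_def a'_def field_simps)
  also have "\<dots> = 2 * (1 - r)"
    using q by (simp add: r_def q_def field_simps)
  finally have r: "a + a' = 2 * (1 - r)" "0 \<le> r" using q by (simp_all add: r_def)
  define Y where "Y = mix_congruence W i j a b"
  define Y' where "Y' = mix_congruence W i j a' (- b)"
  have Y: "Y \<in> elliptope" "Y' \<in> elliptope"
    using mix_congruence_in_elliptope[OF W(1) w(2)] ab ab' by (simp_all add: Y_def Y'_def)
  have near: "entry_l1 (W - midpoint Y Y') \<le> K * r"
    unfolding Y_def Y'_def K_def
    by (rule entry_l1_diff_midpoint_mix_congruence[OF W(1) w(2) ab ab' r])
  have "(W - Y) $ i $ j = 2 * e * (d + e * w) / q"
  proof -
    have "(W - Y) $ i $ j = w - (a * w + b)"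
      using w(2) elliptope_diag[OF W(1)] by (simp add: Y_def mix_congruence_entry[OF W(1) w(2)] w_def)
    also have "\<dots> = (w * q - (d - e * e + 2 * e * w) * w + 2 * e) / q"
      using q by (simp add: a_def b_def field_simps)
    also have "w * q - (d - e * e + 2 * e * w) * w + 2 * e = 2 * e * (d + e * w)"
      unfolding q_def d_def by algebra
    finally show ?thesis .
  qed
  then have far: "2 * e * (d + e * w) / q \<le> entry_l1 (W - Y)"
    using abs_entry_le_entry_l1[of "W - Y" i j] by (metis abs_ge_self order_trans)
  have "C * K * e < d + e * w"
  proof -
    have "d = e * (1 + C * K)" using CK by (simp add: e_def)
    moreover have "e * - 1 < e * w"
      using w(1) e by (intro mult_strict_left_mono) (auto simp: abs_less_iff)
    ultimately show ?thesis by (simp add: algebra_simps)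
  qed
  then have "2 * e / q * (C * K * e) < 2 * e / q * (d + e * w)"
    using e q by (intro mult_strict_left_mono) auto
  then have "C * (K * r) < 2 * e * (d + e * w) / q"
    by (simp add: r_def mult_ac)
  moreover have "C * entry_l1 (W - midpoint Y Y') \<le> C * (K * r)" using near C by (rule mult_left_mono)
  ultimately have "C * entry_l1 (W - midpoint Y Y') < entry_l1 (W - Y)" using far by linarith
  with Y show ?thesis by blast
qed

lemma affine_bij_image_ising_subset:
  fixes \<sigma> :: "real^'n^'n \<Rightarrow> real^'n^'n"
  assumes aff: "affine_on elliptope \<sigma>" and bij: "bij_betw \<sigma> elliptope elliptope"
  shows "\<sigma> ` ising \<subseteq> ising"
proof
  fix Z assume "Z \<in> \<sigma> ` ising"
  then obtain X where X: "X \<in> ising" "Z = \<sigma> X" by blast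
  have Z: "Z \<in> elliptope" using X ising_subset_elliptope bij by (auto simp: bij_betw_def)
  show "Z \<in> ising"
  proof (rule ccontr)
    assume "Z \<notin> ising"
    then obtain Y Y' where Y: "Y \<in> elliptope" "Y' \<in> elliptope"
      and far: "2 * real CARD('n) ^ 4 * entry_l1 (Z - midpoint Y Y') < entry_l1 (Z - Y)"
      using not_ising_imp_far_chord_near_midpoint[OF Z, of "2 * real CARD('n) ^ 4"] by auto
    with affine_bij_image_ising_sharp[OF aff bij X(1) Y] X(2) show False by simp
  qed
qed

theorem lemma5:
  fixes \<sigma> :: "real^'n^'n \<Rightarrow> real^'n^'n"
  assumes "affine_on elliptope \<sigma>"
    and "bij_betw \<sigma> elliptope elliptope"
  shows "\<sigma> ` ising = ising"
proof
  show "\<sigma> ` ising \<subseteq> ising" by (rule affine_bij_image_ising_subset[OF assms])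
  let ?\<tau> = "inv_into elliptope \<sigma>"
  have "affine_on elliptope ?\<tau>"
    using affine_on_inv_into[OF convex_elliptope assms(1)] assms(2) by (simp add: bij_betw_def)
  then have "?\<tau> ` ising \<subseteq> ising"
    by (rule affine_bij_image_ising_subset[OF _ bij_betw_inv_into[OF assms(2)]])
  moreover have "Z = \<sigma> (?\<tau> Z)" if "Z \<in> ising" for Z
    using that ising_subset_elliptope assms(2) by (auto simp: bij_betw_def f_inv_into_f)
  ultimately show "ising \<subseteq> \<sigma> ` ising" by blast
qed

end
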